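(* $$\sum_{k=1}^\infty\frac{12635k^2-5259k+832}{k\binom{4k}k}\left(\frac 98\right)^{k-1}=1944+\frac{640}{\sqrt3}\pi.$$ *)

theory Defs
  imports "HOL-Analysis.Analysis"
begin

end

(* Since 1 / (k * (4k choose k)) = B(k, 3k + 1) is the integral of x^(k-1) (1 - x)^(3k) over [0,1],
   the series is the integral over [0,1] of (1 - x)^3 times a power series in
   t = 9/8 x (1 - x)^3, which lies in [0,1) there.  That power series is a combination of
   1/(1 - t), 1/(1 - t)^2 and 1/(1 - t)^3, and 8 (1 - t) = (3x^2 + 1)(3x^2 - 9x + 8), so the
   integrand is a rational function with an explicit elementary antiderivative.  All terms are
   nonnegative, so summation and integration may be interchanged. *)

theory Submission
  imports Defs
begin

lemma sums_Suc_mult_Suc_Suc_power: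
  fixes z :: "'a :: {real_normed_field,banach}"
  assumes "norm z < 1"
  shows "(\<lambda>n. of_nat (Suc n * Suc (Suc n)) * z ^ n) sums (2 / (1 - z) ^ 3)"
proof -
  have "(\<lambda>n. diffs (\<lambda>n. of_nat (Suc n)) n * z ^ n) sums (2 / (1 - z) ^ 3)"
  proof (rule termdiffs_sums_strong)
    fix z :: 'a assume "norm z < 1"
    then show "(\<lambda>n. of_nat (Suc n) * z ^ n) sums (1 / (1 - z) ^ 2)"
      by (rule geometric_deriv_sums)
  next
    have "1 - z \<noteq> 0"
      using assms by auto
    then show "((\<lambda>z. 1 / (1 - z) ^ 2) has_field_derivative 2 / (1 - z) ^ 3) (at z)"
      by (auto intro!: derivative_eq_intros simp: divide_simps eval_nat_numeral)
  qed (use assms in auto)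
  then show ?thesis
    by (simp add: diffs_def algebra_simps)
qed

lemma has_integral_power_mult_power_one_minus:
  "((\<lambda>x::real. x ^ m * (1 - x) ^ n) has_integral (fact m * fact n / fact (m + n + 1))) {0..1}"
proof -
  have Beta: "((\<lambda>x. x powr (real m + 1 - 1) * (1 - x) powr (real n + 1 - 1)) has_integral
          Beta (real m + 1) (real n + 1)) {0..1}"
    by (rule has_integral_Beta_real) auto
  have "((\<lambda>x::real. x ^ m * (1 - x) ^ n) has_integral Beta (real m + 1) (real n + 1)) {0..1}"
    by (rule has_integral_spike_finite[OF _ _ Beta, of "{0, 1}"]) (auto simp: powr_realpow)
  moreover have "Beta (real m + 1) (real n + 1) = fact m * fact n / fact (m + n + 1)"
  proof -
    have Gamma: "Gamma (real k + 1) = fact k" for k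
      using Gamma_fact[of k, where 'a = real] by (simp add: add.commute)
    have sum: "real m + 1 + (real n + 1) = real (m + n + 1) + 1"
      by simp
    show ?thesis
      unfolding Beta_def sum Gamma ..
  qed
  ultimately show ?thesis
    by simp
qed

lemma inverse_Suc_mult_binomial:
  "1 / (real (Suc n) * real ((Suc n + m) choose Suc n)) = fact n * fact m / fact (n + m + 1)"
proof -
  have "real ((Suc n + m) choose Suc n)
      = fact (Suc n + m) / (fact (Suc n) * fact (Suc n + m - Suc n))"
    by (rule binomial_fact) simp
  also have "Suc n + m - Suc n = m"
    by simp
  also have "(fact (Suc n) :: real) = real (Suc n) * fact n"
    by (rule fact_Suc)
  finally have binomial:
    "real ((Suc n + m) choose Suc n) = fact (Suc n + m) / (real (Suc n) * fact n * fact m)" .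
  show ?thesis
    unfolding binomial by (simp add: field_simps del: fact_Suc of_nat_Suc)
qed

lemma sums_has_integral_termwise_nonneg:
  fixes f :: "nat \<Rightarrow> 'a::euclidean_space \<Rightarrow> real"
  assumes f: "\<And>n. (f n has_integral I n) S"
    and nonneg: "\<And>n x. x \<in> S \<Longrightarrow> 0 \<le> f n x"
    and sums: "\<And>x. x \<in> S \<Longrightarrow> (\<lambda>n. f n x) sums g x"
    and g: "(g has_integral J) S"
  shows "I sums J"
proof -
  define F where "F N x = (\<Sum>n<N. f n x)" for N x
  have F: "(F N has_integral (\<Sum>n<N. I n)) S" for N
    unfolding F_def by (intro has_integral_sum f) auto
  have "norm (F N x) \<le> g x" if "x \<in> S" for N x
  proof -
    have "0 \<le> F N x"
      unfolding F_def by (intro sum_nonneg nonneg that)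
    moreover have "F N x \<le> g x"
      unfolding F_def sums_unique[OF sums[OF that]]
      using sums[OF that] nonneg[OF that] by (intro sum_le_suminf) (auto simp: sums_iff)
    ultimately show ?thesis
      by simp
  qed
  moreover have "(\<lambda>N. F N x) \<longlonglongrightarrow> g x" if "x \<in> S" for x
    using sums[OF that] unfolding F_def sums_def .
  ultimately have "(\<lambda>N. integral S (F N)) \<longlonglongrightarrow> integral S g"
    using has_integral_integrable[OF F] has_integral_integrable[OF g]
    by (intro dominated_convergence(2)[where h = g]) auto
  then show ?thesis
    unfolding sums_def integral_unique[OF F] integral_unique[OF g] .
qed

lemma arctan_sqrt_3: "arctan (sqrt 3) = pi / 3"
  using pi_gt_zero by (intro arctan_unique tan_60) linarith+

definition ratio :: "real \<Rightarrow> real" where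
  "ratio x = 9 / 8 * x * (1 - x) ^ 3"

definition qpoly :: "real \<Rightarrow> real" where
  "qpoly x = 9 * x ^ 4 - 27 * x ^ 3 + 27 * x ^ 2 - 9 * x + 8"

definition qpoly' :: "real \<Rightarrow> real" where
  "qpoly' x = 36 * x ^ 3 - 81 * x ^ 2 + 54 * x - 9"

definition rpoly :: "real \<Rightarrow> real" where
  "rpoly x = 324 * x ^ 7 - 2997 * x ^ 6 + 10206 * x ^ 5 - 30390 * x ^ 4 + 63396 * x ^ 3
     - 70677 * x ^ 2 + 35970 * x - 7880"

definition rpoly' :: "real \<Rightarrow> real" where
  "rpoly' x = 2268 * x ^ 6 - 17982 * x ^ 5 + 51030 * x ^ 4 - 121560 * x ^ 3 + 190188 * x ^ 2
     - 141354 * x + 35970"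

definition integrand :: "real \<Rightarrow> real" where
  "integrand x =
     (1 - x) ^ 3 * (25270 / (1 - ratio x) ^ 3 - 17894 / (1 - ratio x) ^ 2 + 832 / (1 - ratio x))"

text \<open>Hermite reduction of \<open>integrand\<close> over \<open>qpoly = 8 (1 - ratio)\<close> gives the rational part
  \<open>rpoly / qpoly\<^sup>2\<close>; the remaining simple fractions integrate to a logarithm and, from the factor
  \<open>3 x\<^sup>2 + 1\<close> of \<open>qpoly\<close>, an arctangent.\<close>

definition antideriv :: "real \<Rightarrow> real" where
  "antideriv x = 64 / 3 * (rpoly x / qpoly x ^ 2) - 1664 / 9 * ln (qpoly x)
     + 1920 * (arctan (sqrt 3 * x) / sqrt 3)"

lemma one_minus_ratio: "1 - ratio x = qpoly x / 8"
  unfolding ratio_def qpoly_def by (simp add: field_simps power2_eq_square power3_eq_cube power4_eq_xxxx)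

lemma qpoly_pos: "qpoly x > 0"
proof -
  have "qpoly x = (3 * x ^ 2 + 1) * (3 * (x - 3 / 2) ^ 2 + 5 / 4)"
    unfolding qpoly_def by (simp add: algebra_simps power2_eq_square power3_eq_cube power4_eq_xxxx)
  also have "\<dots> > 0"
    by (intro mult_pos_pos add_nonneg_pos) auto
  finally show ?thesis .
qed

lemma abs_ratio_less_1: "x \<in> {0..1} \<Longrightarrow> \<bar>ratio x\<bar> < 1"
  using one_minus_ratio[of x] qpoly_pos[of x] by (auto simp: ratio_def)

lemma has_real_derivative_qpoly [derivative_intros]: "(qpoly has_real_derivative qpoly' x) (at x)"
  unfolding qpoly_def [abs_def] qpoly'_def
  by (auto intro!: derivative_eq_intros simp: algebra_simps power2_eq_square power3_eq_cube)

lemma has_real_derivative_rpoly [derivative_intros]: "(rpoly has_real_derivative rpoly' x) (at x)"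
  unfolding rpoly_def [abs_def] rpoly'_def
  by (auto intro!: derivative_eq_intros simp: algebra_simps)

lemma has_real_derivative_rpoly_div_qpoly_square:
  "((\<lambda>x. rpoly x / qpoly x ^ 2) has_real_derivative
     (rpoly' x * qpoly x - 2 * rpoly x * qpoly' x) / qpoly x ^ 3) (at x)"
  using qpoly_pos[of x]
  by (auto intro!: derivative_eq_intros simp: field_simps power2_eq_square power3_eq_cube)

lemma has_real_derivative_ln_qpoly:
  "((\<lambda>x. ln (qpoly x)) has_real_derivative qpoly' x / qpoly x) (at x)"
  using qpoly_pos[of x] by (auto intro!: derivative_eq_intros simp: field_simps)

lemma has_real_derivative_arctan_sqrt_3:
  "((\<lambda>x. arctan (sqrt 3 * x) / sqrt 3) has_real_derivative 1 / (1 + 3 * x ^ 2)) (at x)"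
proof -
  have "1 + 3 * x ^ 2 \<noteq> 0"
    by (smt (verit) zero_le_power2)
  then show ?thesis
    by (auto intro!: derivative_eq_intros simp: power_mult_distrib field_simps)
qed

lemma antideriv_numerator_identity:
  "3 * (rpoly' x * qpoly x - 2 * rpoly x * qpoly' x) * (1 + 3 * x ^ 2) * 64
     - 1664 * qpoly' x * qpoly x ^ 2 * (1 + 3 * x ^ 2) + 17280 * qpoly x ^ 3
   = 9 * (1 + 3 * x ^ 2) * (1 - x) ^ 3 * (25270 * 512 - 17894 * 64 * qpoly x + 832 * 8 * qpoly x ^ 2)"
  unfolding rpoly'_def qpoly_def rpoly_def qpoly'_def by algebra

lemma has_real_derivative_antideriv: "(antideriv has_real_derivative integrand x) (at x)"
proof -
  \<comment> \<open>Opaque names for the polynomial values keep \<open>field_simps\<close> from expanding them.\<close>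
  define q where "q = qpoly x"
  define q' where "q' = qpoly' x"
  define r where "r = rpoly x"
  define r' where "r' = rpoly' x"
  define p where "p = 1 + 3 * x ^ 2"
  define c where "c = (1 - x) ^ 3"
  have "q \<noteq> 0"
    using qpoly_pos[of x] q_def by simp
  have "p \<noteq> 0"
    unfolding p_def by (smt (verit) zero_le_power2)
  have "(antideriv has_real_derivative
      64 / 3 * ((r' * q - 2 * r * q') / q ^ 3) - 1664 / 9 * (q' / q) + 1920 * (1 / p)) (at x)"
    unfolding antideriv_def [abs_def] q_def q'_def r_def r'_def p_def
    by (intro DERIV_add DERIV_diff DERIV_cmult has_real_derivative_rpoly_div_qpoly_square
          has_real_derivative_ln_qpoly has_real_derivative_arctan_sqrt_3)
  moreover have "64 / 3 * ((r' * q - 2 * r * q') / q ^ 3) - 1664 / 9 * (q' / q) + 1920 * (1 / p)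
      = (3 * (r' * q - 2 * r * q') * p * 64 - 1664 * q' * q ^ 2 * p + 17280 * q ^ 3) / (9 * q ^ 3 * p)"
    using \<open>q \<noteq> 0\<close> \<open>p \<noteq> 0\<close> by (simp add: field_simps power2_eq_square power3_eq_cube)
  also have "\<dots> = 9 * p * c * (25270 * 512 - 17894 * 64 * q + 832 * 8 * q ^ 2) / (9 * q ^ 3 * p)"
    using antideriv_numerator_identity[of x, folded q_def q'_def r_def r'_def p_def c_def]
    by (simp add: ac_simps)
  also have "\<dots> = integrand x"
    unfolding integrand_def one_minus_ratio q_def [symmetric] c_def [symmetric]
    using \<open>q \<noteq> 0\<close> \<open>p \<noteq> 0\<close> by (simp add: field_simps power2_eq_square power3_eq_cube)
  finally show ?thesis
    by simp
qed

lemma has_integral_integrand: "(integrand has_integral (1944 + 640 / sqrt 3 * pi)) {0..1}"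
proof -
  have "(integrand has_integral (antideriv 1 - antideriv 0)) {0..1}"
    using has_real_derivative_antideriv
    by (intro fundamental_theorem_of_calculus)
      (auto simp: has_real_derivative_iff_has_vector_derivative has_vector_derivative_at_within)
  moreover have "antideriv 1 - antideriv 0 = 1944 + 640 / sqrt 3 * pi"
    unfolding antideriv_def by (simp add: qpoly_def rpoly_def arctan_sqrt_3)
  ultimately show ?thesis
    by simp
qed

definition summand :: "nat \<Rightarrow> real \<Rightarrow> real" where
  "summand n x = (12635 * real (Suc n) ^ 2 - 5259 * real (Suc n) + 832) * (9 / 8) ^ n
     * (x ^ n * (1 - x) ^ (3 * Suc n))"

lemma summand_nonneg: "x \<in> {0..1} \<Longrightarrow> 0 \<le> summand n x"
proof -
  assume "x \<in> {0..1}"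
  have "real (Suc n) * 1 \<le> real (Suc n) * real (Suc n)"
    by (intro mult_left_mono) auto
  then have "5259 * real (Suc n) \<le> 12635 * real (Suc n) ^ 2"
    unfolding power2_eq_square by linarith
  with \<open>x \<in> {0..1}\<close> show ?thesis
    unfolding summand_def by (intro mult_nonneg_nonneg) auto
qed

text \<open>Rewriting \<open>12635 k\<^sup>2 - 5259 k + 832 = 12635 k (k + 1) - 17894 k + 832\<close> turns the
  series into a combination of the generating series of \<open>1\<close>, \<open>k\<close> and \<open>k (k + 1)\<close>.\<close>

lemma summand_eq_ratio_power:
  "summand n x = (1 - x) ^ 3 * (12635 * (of_nat (Suc n * Suc (Suc n)) * ratio x ^ n)
     - 17894 * (of_nat (Suc n) * ratio x ^ n) + 832 * ratio x ^ n)"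
proof -
  have "ratio x ^ n = (9 / 8) ^ n * (x ^ n * (1 - x) ^ (3 * n))"
    unfolding ratio_def by (simp add: power_mult_distrib power_mult power_divide)
  moreover have "(1 - x) ^ (3 * Suc n) = (1 - x) ^ 3 * (1 - x) ^ (3 * n)"
    by (simp add: power_add [symmetric])
  ultimately show ?thesis
    unfolding summand_def by (simp add: algebra_simps power2_eq_square)
qed

lemma summand_sums: "x \<in> {0..1} \<Longrightarrow> (\<lambda>n. summand n x) sums integrand x"
proof -
  assume "x \<in> {0..1}"
  then have "norm (ratio x) < 1"
    using abs_ratio_less_1 by simp
  then have "(\<lambda>n. (1 - x) ^ 3 * (12635 * (of_nat (Suc n * Suc (Suc n)) * ratio x ^ n)
      - 17894 * (of_nat (Suc n) * ratio x ^ n) + 832 * ratio x ^ n)) sums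
    ((1 - x) ^ 3 * (12635 * (2 / (1 - ratio x) ^ 3) - 17894 * (1 / (1 - ratio x) ^ 2)
      + 832 * (1 / (1 - ratio x))))"
    by (intro sums_mult sums_add sums_diff sums_Suc_mult_Suc_Suc_power geometric_deriv_sums
          geometric_sums)
  then show ?thesis
    unfolding summand_eq_ratio_power integrand_def by simp
qed

lemma has_integral_summand:
  "(summand n has_integral (let k = Suc n in
     (12635 * real k ^ 2 - 5259 * real k + 832) / (real k * real ((4 * k) choose k))
     * (9 / 8) ^ (k - 1))) {0..1}"
proof -
  have "4 * Suc n = Suc n + 3 * Suc n"
    by simp
  then have binomial: "1 / (real (Suc n) * real ((4 * Suc n) choose Suc n))
      = fact n * fact (3 * Suc n) / fact (n + 3 * Suc n + 1)"
    using inverse_Suc_mult_binomial by presburger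
  have "(summand n has_integral (12635 * real (Suc n) ^ 2 - 5259 * real (Suc n) + 832) * (9 / 8) ^ n
      * (fact n * fact (3 * Suc n) / fact (n + 3 * Suc n + 1))) {0..1}"
    unfolding summand_def [abs_def]
    by (rule has_integral_mult_right[OF has_integral_power_mult_power_one_minus])
  then show ?thesis
    unfolding Let_def binomial [symmetric] by simp
qed

theorem lemma2p2:
  shows "(\<lambda>n. let k = Suc n in
            (12635 * real k ^ 2 - 5259 * real k + 832) / (real k * real ((4 * k) choose k))
            * (9 / 8) ^ (k - 1))
         sums (1944 + 640 / sqrt 3 * pi)"
  by (rule sums_has_integral_termwise_nonneg[OF has_integral_summand summand_nonneg
        summand_sums has_integral_integrand])

end
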